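(* Fix $v\in[n]$. Let $G$ be a random variable with $\mathbb P(G\ge k)=2^{-k}$ for $k\in\{0,1,2,\dots\}$, independent of $\mathcal S_n(v)$, and let $D=\min\{G,|\mathcal S_n(v)|\}$. Then $d_n(v)\stackrel{\mathcal L}{=}D$, and for all $k,l\in\mathbb N$, \[\mathbb P(d_n(v)\ge k,\ h_n(v)\le l)=2^{-k}\,\mathbb P\big(\mathrm{Bin}(|\mathcal S_n(v)|-k,1/2)\le l,\ |\mathcal S_n(v)|\ge k\big),\] where, conditionally on $|\mathcal S_n(v)|$, the binomial variable has $|\mathcal S_n(v)|-k$ trials with success probability $1/2$.
   Context: Kingman's $n$-coalescent $(F_n,\dots,F_1)$: forests on $[n]$, rooted trees with edges directed towards roots; $F_n$ has no edges; for $2\le i\le n$, list the trees of $F_i$ as $T^{(i)}_1,\dots,T^{(i)}_i$ in increasing order of smallest label, choose $\{a_i,b_i\}$ uniformly among 2-subsets of $[i]$ and an independent fair bit $\xi_i$ (all independent over $i$), and obtain $F_{i-1}$ by adding an edge between the roots of $T^{(i)}_{a_i},T^{(i)}_{b_i}$ directed towards the root of $T^{(i)}_{\min(a_i,b_i)}$ if $\xi_i=1$, towards the other root otherwise (the head becomes the root of the merged tree). $T^{(n)}$ is the unique tree of $F_1$; $d_n(v)$ and $h_n(v)$ are the number of children and the depth of $v$ in $T^{(n)}$. For $v\in[n]$ and $1\le i\le n$, $T_i(v)$ is the tree of $F_i$ containing $v$. The selection set is $\mathcal S_n(v)=\{2\le i\le n: T_i(v)\in\{T^{(i)}_{a_i},T^{(i)}_{b_i}\}\}$.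 *)

theory Defs
  imports "HOL-Probability.Probability"
begin

text \<open>A forest on [n] is encoded by (i) the list of its trees, each tree given as
  (root, vertex set), listed in increasing order of smallest label, and (ii) its edge set,
  a set of pairs (child, parent), i.e. edges directed towards the root.\<close>

type_synonym forest = "(nat \<times> nat set) list \<times> (nat \<times> nat) set"

text \<open>Random choice at step i: (a, b, xi) with 1 \<le> a < b \<le> i encoding the 2-subset {a,b}.\<close>
type_synonym choice = "nat \<times> nat \<times> bool"

definition init_forest :: "nat \<Rightarrow> forest" where
  "init_forest n = (map (\<lambda>j. (j, {j})) [1..<Suc n], {})"

text \<open>Merge trees number a and b (1-indexed, a < b); if xi, the edge points towards the root
  of tree number min(a,b) = a, otherwise towards the root of tree b.\<close>
definition merge_step :: "choice \<Rightarrow> forest \<Rightarrow> forest" where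
  "merge_step c F = (case c of (a, b, xi) \<Rightarrow>
     let ts = fst F; E = snd F;
         (ra, Va) = ts ! (a - 1); (rb, Vb) = ts ! (b - 1);
         hd_r = (if xi then ra else rb); tl_r = (if xi then rb else ra);
         others = map snd (filter (\<lambda>(j, t). j \<noteq> a - 1 \<and> j \<noteq> b - 1) (List.enumerate 0 ts))
     in (sort_key (\<lambda>(r, V). Min V) ((hd_r, Va \<union> Vb) # others), insert (tl_r, hd_r) E))"

text \<open>coal_aux w n m = F_{n-m}: the forest after the merges at steps n, n-1, ..., n-m+1.\<close>
fun coal_aux :: "(nat \<Rightarrow> choice) \<Rightarrow> nat \<Rightarrow> nat \<Rightarrow> forest" where
  "coal_aux w n 0 = init_forest n"
| "coal_aux w n (Suc m) = merge_step (w (n - m)) (coal_aux w n m)"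

definition coal :: "(nat \<Rightarrow> choice) \<Rightarrow> nat \<Rightarrow> nat \<Rightarrow> forest" where
  "coal w n i = coal_aux w n (n - i)"

definition choice_pmf :: "nat \<Rightarrow> choice pmf" where
  "choice_pmf i = pmf_of_set {(a, b, xi). 1 \<le> a \<and> a < b \<and> b \<le> i}"

definition kingman_pmf :: "nat \<Rightarrow> (nat \<Rightarrow> choice) pmf" where
  "kingman_pmf n = Pi_pmf {2..n} (0, 0, False) choice_pmf"

text \<open>T^{(n)} is the unique tree of F_1; d_n(v) = number of children, h_n(v) = depth
  (number of proper ancestors, i.e. the length of the path from v to the root).\<close>
definition dn :: "(nat \<Rightarrow> choice) \<Rightarrow> nat \<Rightarrow> nat \<Rightarrow> nat" where
  "dn w n v = card {u. (u, v) \<in> snd (coal w n 1)}"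

definition hn :: "(nat \<Rightarrow> choice) \<Rightarrow> nat \<Rightarrow> nat \<Rightarrow> nat" where
  "hn w n v = card {u. (v, u) \<in> (snd (coal w n 1))\<^sup>+}"

definition sel :: "(nat \<Rightarrow> choice) \<Rightarrow> nat \<Rightarrow> nat \<Rightarrow> nat set" where
  "sel w n v = {i \<in> {2..n}. case w i of (a, b, xi) \<Rightarrow>
      v \<in> snd (fst (coal w n i) ! (a - 1)) \<or> v \<in> snd (fst (coal w n i) ! (b - 1))}"

end

theory Submission
  imports Defs
begin

text \<open>Only the merges at steps in the selection set S_n(v) touch the tree of v, and at each of
  them the new edge points towards the root of v's tree or away from it according to a fair coin
  that is independent of the vertex sets of all forests, hence of S_n(v). Reading these coins in
  the order of the merges, v gains a child at every win before its first loss (afterwards v is no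
  longer a root) and its depth grows by one at every loss. So, given |S_n(v)| = c, the pair
  (d_n(v), h_n(v)) is distributed as (length of the initial run of wins, number of losses) of c
  fair coins; the first component is min(G, c), and the joint tail is 2^-k times a binomial
  probability.\<close>

lemma measure_bind_pmf:
  "measure_pmf.prob (bind_pmf M N) X = measure_pmf.expectation M (\<lambda>x. measure_pmf.prob (N x) X)"
proof -
  have "ennreal (measure_pmf.prob (bind_pmf M N) X) = (\<integral>\<^sup>+x. ennreal (measure_pmf.prob (N x) X) \<partial>M)"
    by (simp add: measure_pmf.emeasure_eq_measure[symmetric])
  also have "\<dots> = ennreal (measure_pmf.expectation M (\<lambda>x. measure_pmf.prob (N x) X))"
    by (rule nn_integral_eq_integral) (auto intro!: measure_pmf.integrable_const_bound[where B=1])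
  finally show ?thesis
    by (subst (asm) ennreal_inj) (auto intro!: integral_nonneg_AE)
qed

lemma map_pmf_Not_bernoulli_half: "map_pmf Not (bernoulli_pmf (1/2)) = bernoulli_pmf (1/2)"
proof (rule pmf_eqI)
  fix b
  have "Not -` {b} = {\<not> b}" by auto
  then show "pmf (map_pmf Not (bernoulli_pmf (1/2))) b = pmf (bernoulli_pmf (1/2)) b"
    by (simp add: pmf_map measure_pmf_single)
qed

lemma map_pair_pmf_eq_bind:
  "map_pmf h (pair_pmf A B) = bind_pmf A (\<lambda>x. map_pmf (\<lambda>y. h (x, y)) B)"
  by (simp add: pair_pmf_def map_bind_pmf map_pmf_def bind_assoc_pmf bind_return_pmf)

section \<open>Runs and losses of fair coins\<close>

text \<open>Read the coins indexed by S in decreasing order of the index, which is the order in which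
  the coalescent performs its merges: the first component counts the initial run of wins,
  the second the losses.\<close>

definition run_losses :: "nat set \<Rightarrow> (nat \<Rightarrow> bool) \<Rightarrow> nat \<times> nat" where
  "run_losses S win = (card {i\<in>S. \<forall>j\<in>S. i \<le> j \<longrightarrow> win j}, card {i\<in>S. \<not> win i})"

definition run_losses_step :: "bool \<Rightarrow> nat \<times> nat \<Rightarrow> nat \<times> nat" where
  "run_losses_step b rl = (if b then (Suc (fst rl), snd rl) else (0, Suc (snd rl)))"

fun run_losses_pmf :: "nat \<Rightarrow> (nat \<times> nat) pmf" where
  "run_losses_pmf 0 = return_pmf (0, 0)"
| "run_losses_pmf (Suc c) =
     bind_pmf (bernoulli_pmf (1/2)) (\<lambda>b. map_pmf (run_losses_step b) (run_losses_pmf c))"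

lemma run_losses_cong: "(\<And>i. i \<in> S \<Longrightarrow> win i = win' i) \<Longrightarrow> run_losses S win = run_losses S win'"
  unfolding run_losses_def by (intro arg_cong2[where f=Pair] arg_cong[where f=card]) auto

lemma run_losses_insert_Max:
  assumes "finite S" "\<forall>j\<in>S. j < m"
  shows "run_losses (insert m S) win = run_losses_step (win m) (run_losses S win)"
proof -
  have "m \<notin> S" using assms by auto
  moreover have "{i\<in>insert m S. \<forall>j\<in>insert m S. i \<le> j \<longrightarrow> win j}
      = (if win m then insert m {i\<in>S. \<forall>j\<in>S. i \<le> j \<longrightarrow> win j} else {})"
    using assms by (auto simp: less_imp_le)
  moreover have "{i\<in>insert m S. \<not> win i} = (if win m then {i\<in>S. \<not> win i} else insert m {i\<in>S. \<not> win i})"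
    by auto
  ultimately show ?thesis
    using assms by (simp add: run_losses_def run_losses_step_def)
qed

lemma run_losses_insert_Min:
  assumes "finite S" "\<forall>j\<in>S. m < j"
  shows "run_losses (insert m S) win =
    (fst (run_losses S win) + (if win m \<and> (\<forall>j\<in>S. win j) then 1 else 0),
     snd (run_losses S win) + (if win m then 0 else 1))"
proof -
  have "m \<notin> S" using assms by auto
  moreover have "{i\<in>insert m S. \<forall>j\<in>insert m S. i \<le> j \<longrightarrow> win j}
      = (if win m \<and> (\<forall>j\<in>S. win j) then insert m {i\<in>S. \<forall>j\<in>S. i \<le> j \<longrightarrow> win j}
         else {i\<in>S. \<forall>j\<in>S. i \<le> j \<longrightarrow> win j})"
    using assms by (auto simp: less_imp_le)
  moreover have "{i\<in>insert m S. \<not> win i} = (if win m then {i\<in>S. \<not> win i} else insert m {i\<in>S. \<not> win i})"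
    by auto
  ultimately show ?thesis
    using assms by (simp add: run_losses_def)
qed

lemma map_run_losses_Pi_pmf:
  assumes "finite S" "\<And>i. i \<in> S \<Longrightarrow> map_pmf (g i) (q i) = bernoulli_pmf (1/2)"
  shows "map_pmf (\<lambda>w. run_losses S (\<lambda>i. g i (w i))) (Pi_pmf S d q) = run_losses_pmf (card S)"
  using assms
proof (induction S rule: finite_linorder_max_induct)
  case empty
  then show ?case by (simp add: run_losses_def)
next
  case (insert m S)
  have "m \<notin> S" using insert by auto
  have "map_pmf (\<lambda>w. run_losses (insert m S) (\<lambda>i. g i (w i))) (Pi_pmf (insert m S) d q)
      = map_pmf (\<lambda>(y, f). run_losses_step (g m y) (run_losses S (\<lambda>i. g i (f i))))
          (pair_pmf (q m) (Pi_pmf S d q))"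
    unfolding Pi_pmf_insert[OF insert(1) \<open>m \<notin> S\<close>] pmf.map_comp
    using \<open>m \<notin> S\<close> by (intro map_pmf_cong refl)
      (auto simp: run_losses_insert_Max insert(1,2) intro!: arg_cong[where f="run_losses_step _"] run_losses_cong)
  also have "\<dots> = bind_pmf (map_pmf (g m) (q m))
      (\<lambda>b. map_pmf (run_losses_step b) (map_pmf (\<lambda>f. run_losses S (\<lambda>i. g i (f i))) (Pi_pmf S d q)))"
    by (simp add: map_pair_pmf_eq_bind pmf.map_comp o_def bind_map_pmf)
  also have "\<dots> = run_losses_pmf (card (insert m S))"
    using insert \<open>m \<notin> S\<close> by simp
  finally show ?case .
qed

lemma map_run_losses_Pi_pmf_subset:
  assumes "finite A" "S \<subseteq> A" "\<And>i. i \<in> S \<Longrightarrow> map_pmf (g i) (q i) = bernoulli_pmf (1/2)"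
  shows "map_pmf (\<lambda>w. run_losses S (\<lambda>i. g i (w i))) (Pi_pmf A d q) = run_losses_pmf (card S)"
proof -
  have "map_pmf (\<lambda>w. run_losses S (\<lambda>i. g i (w i))) (Pi_pmf A d q)
     = map_pmf (\<lambda>w. run_losses S (\<lambda>i. g i (w i))) (map_pmf (\<lambda>f x. if x \<in> S then f x else d) (Pi_pmf A d q))"
    unfolding pmf.map_comp o_def by (intro map_pmf_cong refl run_losses_cong) auto
  also have "\<dots> = run_losses_pmf (card S)"
    unfolding Pi_pmf_subset[OF assms(1,2), symmetric]
    using assms finite_subset by (intro map_run_losses_Pi_pmf) auto
  finally show ?thesis .
qed

lemma map_fst_run_losses_pmf:
  "map_pmf fst (run_losses_pmf c) = map_pmf (\<lambda>g. min g c) (geometric_pmf (1/2))"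
proof (induction c)
  case 0
  then show ?case by (simp add: map_pmf_const)
next
  case (Suc c)
  have "map_pmf fst (run_losses_pmf (Suc c)) = bind_pmf (bernoulli_pmf (1/2))
      (\<lambda>b. if b then map_pmf Suc (map_pmf fst (run_losses_pmf c)) else return_pmf 0)"
    by (auto simp: map_bind_pmf pmf.map_comp o_def run_losses_step_def map_pmf_const
        intro!: bind_pmf_cong)
  also have "\<dots> = bind_pmf (map_pmf Not (bernoulli_pmf (1/2)))
      (\<lambda>b. if b then return_pmf 0 else map_pmf (\<lambda>g. Suc (min g c)) (geometric_pmf (1/2)))"
    unfolding Suc.IH bind_map_pmf pmf.map_comp by (intro bind_pmf_cong) (auto simp: o_def)
  also have "\<dots> = map_pmf (\<lambda>g. min g (Suc c)) (geometric_pmf (1/2))"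
    unfolding map_pmf_Not_bernoulli_half
    by (subst (2) geometric_bind_pmf_unfold)
      (auto simp: map_bind_pmf pmf.map_comp o_def intro!: bind_pmf_cong)
  finally show ?case .
qed

lemma map_snd_run_losses_pmf: "map_pmf snd (run_losses_pmf c) = binomial_pmf c (1/2)"
proof (induction c)
  case 0
  then show ?case by (simp add: binomial_pmf_0)
next
  case (Suc c)
  have "map_pmf snd (run_losses_pmf (Suc c)) = bind_pmf (map_pmf Not (bernoulli_pmf (1/2)))
      (\<lambda>b. map_pmf (\<lambda>k. (if b then 1 else 0) + k) (binomial_pmf c (1/2)))"
    unfolding Suc.IH[symmetric] bind_map_pmf
    by (auto simp: map_bind_pmf pmf.map_comp o_def run_losses_step_def intro!: bind_pmf_cong)
  then show ?case
    unfolding map_pmf_Not_bernoulli_half by (simp add: binomial_pmf_Suc map_pmf_def)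
qed

lemma prob_run_losses_pmf:
  "measure_pmf.prob (run_losses_pmf c) {rl. k \<le> fst rl \<and> snd rl \<le> l}
   = (1/2)^k * (if k \<le> c then measure_pmf.prob (binomial_pmf (c - k) (1/2)) {..l} else 0)"
proof (induction k arbitrary: c)
  case 0
  have "measure_pmf.prob (run_losses_pmf c) {rl. 0 \<le> fst rl \<and> snd rl \<le> l}
       = measure_pmf.prob (map_pmf snd (run_losses_pmf c)) {..l}"
    by (simp add: vimage_def)
  then show ?case by (simp add: map_snd_run_losses_pmf)
next
  case (Suc k)
  show ?case
  proof (cases c)
    case 0
    then show ?thesis by simp
  next
    case (Suc c')
    have "measure_pmf.prob (run_losses_pmf c) {rl. Suc k \<le> fst rl \<and> snd rl \<le> l}
        = measure_pmf.expectation (bernoulli_pmf (1/2)) (\<lambda>b. measure_pmf.prob (run_losses_pmf c')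
            (run_losses_step b -` {rl. Suc k \<le> fst rl \<and> snd rl \<le> l}))"
      by (simp add: Suc measure_bind_pmf)
    also have "\<dots> = (1/2) * measure_pmf.prob (run_losses_pmf c') {rl. k \<le> fst rl \<and> snd rl \<le> l}"
      by (simp add: run_losses_step_def vimage_def)
    finally show ?thesis by (simp add: Suc.IH \<open>c = Suc c'\<close>)
  qed
qed

section \<open>Forests and joins of two trees\<close>

fun wf_forest :: "forest \<Rightarrow> bool" where
  "wf_forest (ts, E) \<longleftrightarrow> distinct ts \<and> finite E \<and>
     (\<forall>t\<in>set ts. fst t \<in> snd t) \<and>
     (\<forall>t1\<in>set ts. \<forall>t2\<in>set ts. t1 \<noteq> t2 \<longrightarrow> snd t1 \<inter> snd t2 = {}) \<and>
     (\<forall>e\<in>E. \<exists>t\<in>set ts. fst e \<in> snd t \<and> snd e \<in> snd t \<and> fst e \<noteq> fst t) \<and>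
     (\<forall>t\<in>set ts. \<forall>x\<in>snd t. (x, fst t) \<in> E\<^sup>*)"

definition num_children :: "nat \<Rightarrow> forest \<Rightarrow> nat" where
  "num_children v F = card {u. (u, v) \<in> snd F}"

definition num_ancestors :: "nat \<Rightarrow> forest \<Rightarrow> nat" where
  "num_ancestors v F = card {u. (v, u) \<in> (snd F)\<^sup>+}"

definition is_root :: "nat \<Rightarrow> forest \<Rightarrow> bool" where
  "is_root v F \<longleftrightarrow> (\<exists>V. (v, V) \<in> set (fst F))"

context
  fixes ts :: "(nat \<times> nat set) list" and E :: "(nat \<times> nat) set"
  assumes wf: "wf_forest (ts, E)"
begin

lemma finite_edges: "finite E"
  using wf by simp

lemma root_in_tree: "t \<in> set ts \<Longrightarrow> fst t \<in> snd t"
  using wf by simp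

lemma tree_eqI: "t1 \<in> set ts \<Longrightarrow> t2 \<in> set ts \<Longrightarrow> x \<in> snd t1 \<Longrightarrow> x \<in> snd t2 \<Longrightarrow> t1 = t2"
  using wf by auto

lemma edge_in_tree: "(x, y) \<in> E \<Longrightarrow> \<exists>t\<in>set ts. x \<in> snd t \<and> y \<in> snd t \<and> x \<noteq> fst t"
  using wf by (metis fst_conv snd_conv wf_forest.simps)

lemma reaches_root: "t \<in> set ts \<Longrightarrow> x \<in> snd t \<Longrightarrow> (x, fst t) \<in> E\<^sup>*"
  using wf by simp

lemma root_not_child: "t \<in> set ts \<Longrightarrow> (fst t, y) \<notin> E"
  using edge_in_tree tree_eqI root_in_tree by metis

lemma rtrancl_from_root: "t \<in> set ts \<Longrightarrow> (fst t, u) \<in> E\<^sup>* \<Longrightarrow> u = fst t"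
  by (erule converse_rtranclE) (auto dest: root_not_child)

lemma rtrancl_in_tree:
  assumes "t \<in> set ts" "(x, y) \<in> E\<^sup>*" "x \<in> snd t"
  shows "y \<in> snd t"
  using assms(2,3)
proof (induction rule: rtrancl_induct)
  case (step y z)
  then obtain t' where "t' \<in> set ts" "y \<in> snd t'" "z \<in> snd t'"
    using edge_in_tree by blast
  then show ?case using tree_eqI[OF assms(1)] step.IH step.prems by blast
qed

lemma root_eq_iff: "(r, V) \<in> set ts \<Longrightarrow> r = v \<longleftrightarrow> v \<in> V \<and> is_root v (ts, E)"
  using tree_eqI root_in_tree unfolding is_root_def by (metis fst_conv snd_conv)

end

context
  fixes ts ts' :: "(nat \<times> nat set) list" and E :: "(nat \<times> nat) set"
    and r1 r2 :: nat and V1 V2 :: "nat set"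
  assumes wf: "wf_forest (ts, E)"
    and in1: "(r1, V1) \<in> set ts" and in2: "(r2, V2) \<in> set ts" and ne: "(r1, V1) \<noteq> (r2, V2)"
    and set_join: "set ts' = insert (r1, V1 \<union> V2) (set ts - {(r1, V1), (r2, V2)})"
begin

lemma disjoint_join: "V1 \<inter> V2 = {}"
  using tree_eqI[OF wf in1 in2] ne by auto

lemma roots_join: "r1 \<in> V1" "r2 \<in> V2"
  using root_in_tree[OF wf in1] root_in_tree[OF wf in2] by simp_all

lemma disjoint_untouched: "t \<in> set ts - {(r1, V1), (r2, V2)} \<Longrightarrow> snd t \<inter> (V1 \<union> V2) = {}"
  using tree_eqI[OF wf _ in1, of t] tree_eqI[OF wf _ in2, of t] by auto

lemma vertices_join: "\<Union>(snd ` set ts') = \<Union>(snd ` set ts)"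
  using set_join in1 in2 by auto

lemma distinct_join: "length ts' = length ts - 1 \<Longrightarrow> distinct ts'"
proof -
  assume len: "length ts' = length ts - 1"
  have "(r1, V1 \<union> V2) \<notin> set ts - {(r1, V1), (r2, V2)}"
    using disjoint_untouched roots_join by fastforce
  moreover have "2 \<le> card (set ts)"
    using card_mono[of "set ts" "{(r1, V1), (r2, V2)}"] in1 in2 ne by simp
  ultimately have "card (set ts') = card (set ts) - 1"
    using set_join in1 in2 ne by (simp add: card_Diff_subset)
  moreover have "distinct ts" using wf by simp
  ultimately show "distinct ts'"
    using len by (simp add: card_distinct distinct_card)
qed

lemma edge_in_tree_join:
  assumes "e \<in> insert (r2, r1) E"
  shows "\<exists>t\<in>set ts'. fst e \<in> snd t \<and> snd e \<in> snd t \<and> fst e \<noteq> fst t"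
proof (cases "e = (r2, r1)")
  case True
  then show ?thesis using set_join roots_join disjoint_join by auto
next
  case False
  then obtain t where t: "t \<in> set ts" "fst e \<in> snd t" "snd e \<in> snd t" "fst e \<noteq> fst t"
    using assms edge_in_tree[OF wf, of "fst e" "snd e"] by auto
  have "fst e \<noteq> r1" if "t = (r2, V2)"
    using that t disjoint_join roots_join by auto
  then show ?thesis using t set_join by (cases "t \<in> {(r1, V1), (r2, V2)}") auto
qed

lemma reaches_root_join:
  assumes "t \<in> set ts'" "x \<in> snd t"
  shows "(x, fst t) \<in> (insert (r2, r1) E)\<^sup>*"
proof -
  have mono: "E\<^sup>* \<subseteq> (insert (r2, r1) E)\<^sup>*" by (rule rtrancl_mono) auto
  consider "t \<in> set ts" | "t = (r1, V1 \<union> V2)" using assms set_join by auto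
  then show ?thesis
  proof cases
    case 1
    then show ?thesis using reaches_root[OF wf 1 assms(2)] mono by auto
  next
    case 2
    then have "(x, r1) \<in> E\<^sup>* \<or> (x, r2) \<in> E\<^sup>*"
      using reaches_root[OF wf in1] reaches_root[OF wf in2] assms(2) by auto
    then show ?thesis
      using 2 mono by (auto intro: rtrancl_into_rtrancl)
  qed
qed

lemma wf_forest_join:
  assumes "length ts' = length ts - 1"
  shows "wf_forest (ts', insert (r2, r1) E)"
proof -
  let ?old = "set ts - {(r1, V1), (r2, V2)}"
  have roots: "\<forall>t\<in>set ts'. fst t \<in> snd t"
    using set_join root_in_tree[OF wf] roots_join by auto
  have disjoint: "\<forall>t1\<in>set ts'. \<forall>t2\<in>set ts'. t1 \<noteq> t2 \<longrightarrow> snd t1 \<inter> snd t2 = {}"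
  proof (intro ballI impI)
    fix t1 t2 assume t: "t1 \<in> set ts'" "t2 \<in> set ts'" "t1 \<noteq> t2"
    consider "t1 \<in> ?old" "t2 \<in> ?old" | "t1 = (r1, V1 \<union> V2)" "t2 \<in> ?old"
      | "t2 = (r1, V1 \<union> V2)" "t1 \<in> ?old"
      using t unfolding set_join by blast
    then show "snd t1 \<inter> snd t2 = {}"
    proof cases
      case 1
      then show ?thesis using tree_eqI[OF wf, of t1 t2] t(3) by blast
    next
      case 2
      then show ?thesis using disjoint_untouched[of t2] by auto
    next
      case 3
      then show ?thesis using disjoint_untouched[of t1] by auto
    qed
  qed
  have edges: "\<forall>e\<in>insert (r2, r1) E. \<exists>t\<in>set ts'. fst e \<in> snd t \<and> snd e \<in> snd t \<and> fst e \<noteq> fst t"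
    using edge_in_tree_join by blast
  have reach: "\<forall>t\<in>set ts'. \<forall>x\<in>snd t. (x, fst t) \<in> (insert (r2, r1) E)\<^sup>*"
    using reaches_root_join by blast
  show ?thesis
    unfolding wf_forest.simps finite_insert
    by (intro conjI distinct_join[OF assms] finite_edges[OF wf] roots disjoint edges reach)
qed

lemma num_children_join:
  "num_children v (ts', insert (r2, r1) E) = num_children v (ts, E) + (if r1 = v then 1 else 0)"
proof -
  have "r2 \<notin> {u. (u, v) \<in> E}" using root_not_child[OF wf in2] by simp
  moreover have "finite {u. (u, v) \<in> E}"
    by (rule finite_subset[of _ "fst ` E"]) (use finite_edges[OF wf] in force)+
  moreover have "{u. (u, v) \<in> insert (r2, r1) E} =
      (if r1 = v then insert r2 {u. (u, v) \<in> E} else {u. (u, v) \<in> E})"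
    by auto
  ultimately show ?thesis by (simp add: num_children_def)
qed

lemma num_ancestors_join:
  assumes "v \<in> \<Union>(snd ` set ts)"
  shows "num_ancestors v (ts', insert (r2, r1) E) = num_ancestors v (ts, E) + (if v \<in> V2 then 1 else 0)"
proof -
  have from_r1: "(r1, u) \<in> E\<^sup>* \<longleftrightarrow> u = r1" for u
    using rtrancl_from_root[OF wf in1] by auto
  have to_r2: "(v, r2) \<in> E\<^sup>* \<longleftrightarrow> v \<in> V2"
  proof
    assume "(v, r2) \<in> E\<^sup>*"
    obtain t where "t \<in> set ts" "v \<in> snd t" using assms by blast
    with \<open>(v, r2) \<in> E\<^sup>*\<close> have "r2 \<in> snd t" using rtrancl_in_tree[OF wf] by blast
    then have "t = (r2, V2)" using tree_eqI[OF wf \<open>t \<in> set ts\<close> in2] roots_join by simp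
    then show "v \<in> V2" using \<open>v \<in> snd t\<close> by simp
  qed (use reaches_root[OF wf in2] in simp)
  have "{u. (v, u) \<in> (insert (r2, r1) E)\<^sup>+} =
      (if v \<in> V2 then insert r1 {u. (v, u) \<in> E\<^sup>+} else {u. (v, u) \<in> E\<^sup>+})"
    unfolding trancl_insert by (auto simp: from_r1 to_r2)
  moreover have "r1 \<notin> {u. (v, u) \<in> E\<^sup>+}" if "v \<in> V2"
  proof
    assume "r1 \<in> {u. (v, u) \<in> E\<^sup>+}"
    then have "r1 \<in> V2"
      using rtrancl_in_tree[OF wf in2, of v r1] that by (simp add: trancl_into_rtrancl)
    then show False using roots_join disjoint_join by blast
  qed
  moreover have "finite {u. (v, u) \<in> E\<^sup>+}"
    by (rule finite_subset[of _ "snd ` E\<^sup>+"]) (use finite_edges[OF wf] in force)+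
  ultimately show ?thesis by (simp add: num_ancestors_def)
qed

lemma is_root_join: "is_root v (ts', insert (r2, r1) E) \<longleftrightarrow> is_root v (ts, E) \<and> v \<notin> V2"
proof
  assume "is_root v (ts', insert (r2, r1) E)"
  then obtain V where "(v, V) \<in> set ts'" unfolding is_root_def by auto
  then consider "v = r1" | "(v, V) \<in> set ts - {(r1, V1), (r2, V2)}"
    unfolding set_join by auto
  then show "is_root v (ts, E) \<and> v \<notin> V2"
  proof cases
    case 1
    then show ?thesis using in1 roots_join disjoint_join unfolding is_root_def by auto
  next
    case 2
    then show ?thesis
      using disjoint_untouched[of "(v, V)"] root_in_tree[OF wf, of "(v, V)"]
      unfolding is_root_def by auto
  qed
next
  assume "is_root v (ts, E) \<and> v \<notin> V2"
  then obtain V where "(v, V) \<in> set ts" "v \<notin> V2" unfolding is_root_def by auto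
  then show "is_root v (ts', insert (r2, r1) E)"
    using set_join roots_join unfolding is_root_def by (cases "(v, V) = (r1, V1)") auto
qed

end

section \<open>One merge step of the coalescent\<close>

lemma map_snd_filter_enumerate:
  "map snd (filter (\<lambda>(j, x). P j) (List.enumerate k xs)) = nths xs {j. P (j + k)}"
proof (induction xs arbitrary: k)
  case (Cons x xs)
  then show ?case by (simp add: nths_Cons algebra_simps)
qed simp

lemma merge_step_eq:
  assumes "ts ! (a - 1) = (ra, Va)" "ts ! (b - 1) = (rb, Vb)"
  shows "merge_step (a, b, xi) (ts, E) =
    (sort_key (\<lambda>(r, V). Min V)
       ((if xi then ra else rb, Va \<union> Vb) # nths ts {j. j \<noteq> a - 1 \<and> j \<noteq> b - 1}),
     insert (if xi then rb else ra, if xi then ra else rb) E)"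
  using assms map_snd_filter_enumerate[of "\<lambda>j. j \<noteq> a - 1 \<and> j \<noteq> b - 1" 0 ts]
  by (simp add: merge_step_def Let_def)

lemma set_nths_remove2:
  assumes "distinct xs" "i < length xs" "j < length xs"
  shows "set (nths xs {k. k \<noteq> i \<and> k \<noteq> j}) = set xs - {xs ! i, xs ! j}"
  using assms by (auto simp: set_nths in_set_conv_nth nth_eq_iff_index_eq)

lemma length_nths_remove2:
  assumes "i < length xs" "j < length xs" "i \<noteq> j"
  shows "length (nths xs {k. k \<noteq> i \<and> k \<noteq> j}) = length xs - 2"
proof -
  have "{k. k < length xs \<and> k \<in> {k. k \<noteq> i \<and> k \<noteq> j}} = {..<length xs} - {i, j}" by auto
  then show ?thesis using assms by (simp add: length_nths)
qed

lemma merge_step_join: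
  assumes "distinct ts" "1 \<le> a" "a < b" "b \<le> length ts"
    and "ts ! (if xi then a - 1 else b - 1) = (r1, V1)"
    and "ts ! (if xi then b - 1 else a - 1) = (r2, V2)"
  obtains ts' where "merge_step (a, b, xi) (ts, E) = (ts', insert (r2, r1) E)"
    "set ts' = insert (r1, V1 \<union> V2) (set ts - {(r1, V1), (r2, V2)})"
    "length ts' = length ts - 1"
proof -
  obtain ra Va rb Vb where ta: "ts ! (a - 1) = (ra, Va)" and tb: "ts ! (b - 1) = (rb, Vb)"
    by fastforce
  define others where "others = nths ts {j. j \<noteq> a - 1 \<and> j \<noteq> b - 1}"
  have chosen: "(r1, V1) = (if xi then (ra, Va) else (rb, Vb))" "(r2, V2) = (if xi then (rb, Vb) else (ra, Va))"
    using assms(5,6) ta tb by (cases xi; simp)+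
  have same_trees: "{(r1, V1), (r2, V2)} = {(ra, Va), (rb, Vb)}"
    using chosen by (cases xi) (simp_all add: insert_commute)
  have same_union: "V1 \<union> V2 = Va \<union> Vb"
    using chosen by (cases xi) (simp_all add: Un_commute)
  have "merge_step (a, b, xi) (ts, E) =
      (sort_key (\<lambda>(r, V). Min V) ((r1, V1 \<union> V2) # others), insert (r2, r1) E)"
    unfolding merge_step_eq[OF ta tb] others_def same_union[symmetric] using chosen by (cases xi) simp_all
  moreover have "set (sort_key (\<lambda>(r, V). Min V) ((r1, V1 \<union> V2) # others)) =
      insert (r1, V1 \<union> V2) (set ts - {(r1, V1), (r2, V2)})"
    using assms(1-4) ta tb by (simp add: others_def set_nths_remove2 same_trees del: sort_key_simps)
  moreover have "length (sort_key (\<lambda>(r, V). Min V) ((r1, V1 \<union> V2) # others)) = length ts - 1"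
    using assms(2-4) by (simp add: others_def length_nths_remove2)
  ultimately show thesis by (rule that)
qed

lemma merge_step_props:
  fixes xi :: bool
  assumes wf: "wf_forest (ts, E)" and v: "v \<in> \<Union>(snd ` set ts)"
    and ab: "1 \<le> a" "a < b" "b \<le> length ts"
  defines "selected \<equiv> v \<in> snd (ts ! (a - 1)) \<or> v \<in> snd (ts ! (b - 1))"
    and "win \<equiv> (if v \<in> snd (ts ! (a - 1)) then xi else \<not> xi)"
    and "F \<equiv> merge_step (a, b, xi) (ts, E)"
  shows "wf_forest F" "length (fst F) = length ts - 1" "v \<in> \<Union>(snd ` set (fst F))"
    "num_children v F = num_children v (ts, E) + (if selected \<and> win \<and> is_root v (ts, E) then 1 else 0)"
    "num_ancestors v F = num_ancestors v (ts, E) + (if selected \<and> \<not> win then 1 else 0)"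
    "is_root v F \<longleftrightarrow> is_root v (ts, E) \<and> \<not> (selected \<and> \<not> win)"
proof -
  obtain r1 V1 r2 V2 where t1: "ts ! (if xi then a - 1 else b - 1) = (r1, V1)"
    and t2: "ts ! (if xi then b - 1 else a - 1) = (r2, V2)"
    by fastforce
  have dist: "distinct ts" using wf by simp
  obtain ts' where F: "F = (ts', insert (r2, r1) E)"
    and set_join: "set ts' = insert (r1, V1 \<union> V2) (set ts - {(r1, V1), (r2, V2)})"
    and len: "length ts' = length ts - 1"
    using merge_step_join[OF dist ab t1 t2] unfolding F_def by blast
  have idx: "(if xi then a - 1 else b - 1) < length ts" "(if xi then b - 1 else a - 1) < length ts"
    using ab by auto
  have in1: "(r1, V1) \<in> set ts" and in2: "(r2, V2) \<in> set ts"
    using nth_mem[OF idx(1)] nth_mem[OF idx(2)] t1 t2 by simp_all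
  have ne: "(r1, V1) \<noteq> (r2, V2)"
    using nth_eq_iff_index_eq[OF dist idx] t1 t2 ab by auto
  have trees: "ts ! (a - 1) = (if xi then (r1, V1) else (r2, V2))"
    "ts ! (b - 1) = (if xi then (r2, V2) else (r1, V1))"
    using t1 t2 by (cases xi; simp)+
  have "V1 \<inter> V2 = {}" using disjoint_join[OF wf in1 in2 ne set_join] .
  then have v1: "v \<in> V1 \<longleftrightarrow> selected \<and> win" and v2: "v \<in> V2 \<longleftrightarrow> selected \<and> \<not> win"
    unfolding selected_def win_def trees by (cases xi; auto)+
  show "wf_forest F" using wf_forest_join[OF wf in1 in2 ne set_join len] unfolding F .
  show "length (fst F) = length ts - 1" using len unfolding F by simp
  show "v \<in> \<Union>(snd ` set (fst F))" using v vertices_join[OF wf in1 in2 ne set_join] unfolding F by simp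
  show "num_children v F = num_children v (ts, E) + (if selected \<and> win \<and> is_root v (ts, E) then 1 else 0)"
    using num_children_join[OF wf in1 in2 ne set_join] root_eq_iff[OF wf in1, of v] v1
    unfolding F by simp
  show "num_ancestors v F = num_ancestors v (ts, E) + (if selected \<and> \<not> win then 1 else 0)"
    using num_ancestors_join[OF wf in1 in2 ne set_join v] v2 unfolding F by simp
  show "is_root v F \<longleftrightarrow> is_root v (ts, E) \<and> \<not> (selected \<and> \<not> win)"
    using is_root_join[OF wf in1 in2 ne set_join] v2 unfolding F by simp
qed

section \<open>The coalescent seen from a vertex\<close>

lemma run_losses_above_Suc:
  assumes "finite S"
  shows "run_losses {j\<in>S. k < j} win =
    (fst (run_losses {j\<in>S. Suc k < j} win)
       + (if Suc k \<in> S \<and> win (Suc k) \<and> (\<forall>j\<in>S. Suc k < j \<longrightarrow> win j) then 1 else 0),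
     snd (run_losses {j\<in>S. Suc k < j} win) + (if Suc k \<in> S \<and> \<not> win (Suc k) then 1 else 0))"
proof (cases "Suc k \<in> S")
  case True
  then have "{j\<in>S. k < j} = insert (Suc k) {j\<in>S. Suc k < j}" by auto
  then show ?thesis using True assms by (simp add: run_losses_insert_Min) blast
next
  case False
  then have "{j\<in>S. k < j} = {j\<in>S. Suc k < j}" by (auto intro: Suc_lessI)
  then show ?thesis using False by simp
qed

lemma init_forest_props:
  "wf_forest (init_forest n)" "length (fst (init_forest n)) = n" "snd (init_forest n) = {}"
  by (auto simp: init_forest_def distinct_map inj_on_def)

lemma init_forest_root:
  assumes "1 \<le> v" "v \<le> n"
  shows "is_root v (init_forest n)" "v \<in> \<Union>(snd ` set (fst (init_forest n)))"
proof -
  have "(v, {v}) \<in> set (fst (init_forest n))"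
    using assms unfolding init_forest_def by (force simp del: upt_Suc)
  then show "is_root v (init_forest n)" "v \<in> \<Union>(snd ` set (fst (init_forest n)))"
    unfolding is_root_def by force+
qed

definition valid_choices :: "nat \<Rightarrow> (nat \<Rightarrow> choice) \<Rightarrow> bool" where
  "valid_choices n w \<longleftrightarrow> (\<forall>i\<in>{2..n}. case w i of (a, b, _) \<Rightarrow> 1 \<le> a \<and> a < b \<and> b \<le> i)"

text \<open>For a step i in the selection set of v: whether the new edge points towards the root of
  the tree of v.\<close>

definition wins :: "(nat \<Rightarrow> choice) \<Rightarrow> nat \<Rightarrow> nat \<Rightarrow> nat \<Rightarrow> bool" where
  "wins w n v i = (case w i of (a, b, xi) \<Rightarrow>
     if v \<in> snd (fst (coal w n i) ! (a - 1)) then xi else \<not> xi)"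

lemma sel_subset: "sel w n v \<subseteq> {2..n}"
  unfolding sel_def by auto

text \<open>The forest F_k seen from v, when S and win describe the merges at the steps above k.\<close>

definition coal_inv :: "nat \<Rightarrow> nat set \<Rightarrow> (nat \<Rightarrow> bool) \<Rightarrow> nat \<Rightarrow> forest \<Rightarrow> bool" where
  "coal_inv v S win k F \<longleftrightarrow> wf_forest F \<and> length (fst F) = k \<and> v \<in> \<Union>(snd ` set (fst F)) \<and>
     (num_children v F, num_ancestors v F) = run_losses {j\<in>S. k < j} win \<and>
     (is_root v F \<longleftrightarrow> (\<forall>j\<in>S. k < j \<longrightarrow> win j))"

lemma coal_inv_merge_step:
  fixes xi :: bool
  assumes inv: "coal_inv v S win (Suc k) (ts, E)" and "finite S"
    and ab: "1 \<le> a" "a < b" "b \<le> Suc k"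
    and sel: "Suc k \<in> S \<longleftrightarrow> v \<in> snd (ts ! (a - 1)) \<or> v \<in> snd (ts ! (b - 1))"
    and win: "win (Suc k) = (if v \<in> snd (ts ! (a - 1)) then xi else \<not> xi)"
  shows "coal_inv v S win k (merge_step (a, b, xi) (ts, E))"
proof -
  have wf: "wf_forest (ts, E)" and len: "length ts = Suc k" and v: "v \<in> \<Union>(snd ` set ts)"
    and rl: "(num_children v (ts, E), num_ancestors v (ts, E)) = run_losses {j\<in>S. Suc k < j} win"
    and root: "is_root v (ts, E) \<longleftrightarrow> (\<forall>j\<in>S. Suc k < j \<longrightarrow> win j)"
    using inv unfolding coal_inv_def by simp_all
  note props = merge_step_props[OF wf v ab(1,2), of xi, unfolded len, OF ab(3), folded sel win]
  have above: "k < j \<longleftrightarrow> j = Suc k \<or> Suc k < j" for j by auto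
  have "(num_children v (merge_step (a, b, xi) (ts, E)), num_ancestors v (merge_step (a, b, xi) (ts, E)))
      = run_losses {j\<in>S. k < j} win"
    using rl root unfolding props(4,5) run_losses_above_Suc[OF \<open>finite S\<close>, where k=k]
    by (simp add: prod_eq_iff)
  moreover have "is_root v (merge_step (a, b, xi) (ts, E)) \<longleftrightarrow> (\<forall>j\<in>S. k < j \<longrightarrow> win j)"
    unfolding props(6) root above by blast
  ultimately show ?thesis
    using props(1-3) unfolding coal_inv_def by simp
qed

lemma coal_inv_coal_aux:
  assumes v: "1 \<le> v" "v \<le> n" and w: "valid_choices n w"
  shows "m < n \<Longrightarrow> coal_inv v (sel w n v) (wins w n v) (n - m) (coal_aux w n m)"
proof (induction m)
  case 0
  have empty: "{j\<in>sel w n v. n < j} = {}" using sel_subset by fastforce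
  then have "\<forall>j\<in>sel w n v. n < j \<longrightarrow> wins w n v j" by blast
  then show ?case
    using init_forest_props[of n] init_forest_root[OF v]
    by (simp add: coal_inv_def empty num_children_def num_ancestors_def run_losses_def)
next
  case (Suc m)
  define k where "k = n - Suc m"
  have n_m: "n - m = Suc k" and "n - Suc k = m" and k: "2 \<le> Suc k" "Suc k \<le> n"
    using Suc.prems k_def by auto
  obtain ts E where F: "coal_aux w n m = (ts, E)" by fastforce
  then have coal: "coal w n (Suc k) = (ts, E)" using \<open>n - Suc k = m\<close> by (simp add: coal_def)
  have "case w (Suc k) of (a, b, _) \<Rightarrow> 1 \<le> a \<and> a < b \<and> b \<le> Suc k"
    using w k unfolding valid_choices_def by simp
  moreover obtain a b xi where wi: "w (Suc k) = (a, b, xi)" by (cases "w (Suc k)")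
  ultimately have "1 \<le> a \<and> a < b \<and> b \<le> Suc k" by simp
  moreover have "Suc k \<in> sel w n v \<longleftrightarrow> v \<in> snd (ts ! (a - 1)) \<or> v \<in> snd (ts ! (b - 1))"
    using k coal wi by (auto simp: sel_def)
  moreover have "wins w n v (Suc k) = (if v \<in> snd (ts ! (a - 1)) then xi else \<not> xi)"
    using coal wi by (simp add: wins_def)
  moreover have "coal_inv v (sel w n v) (wins w n v) (Suc k) (ts, E)"
    using Suc F n_m by simp
  ultimately have "coal_inv v (sel w n v) (wins w n v) k (merge_step (a, b, xi) (ts, E))"
    using coal_inv_merge_step finite_subset[OF sel_subset finite_atLeastAtMost] by blast
  then show ?case using F wi n_m by (simp add: k_def)
qed

lemma dn_hn_eq_run_losses:
  assumes "1 \<le> v" "v \<le> n" "valid_choices n w"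
  shows "(dn w n v, hn w n v) = run_losses (sel w n v) (wins w n v)"
proof -
  have "{j\<in>sel w n v. 1 < j} = sel w n v" using sel_subset by fastforce
  then show ?thesis
    using coal_inv_coal_aux[OF assms, of "n - 1"] assms(1,2)
    by (simp add: coal_inv_def dn_def hn_def coal_def num_children_def num_ancestors_def)
qed

section \<open>Pairs and coins are independent\<close>

definition pair_choice_pmf :: "nat \<Rightarrow> (nat \<times> nat) pmf" where
  "pair_choice_pmf i = pmf_of_set {(a, b). 1 \<le> a \<and> a < b \<and> b \<le> i}"

definition with_coin :: "nat \<times> nat \<Rightarrow> choice pmf" where
  "with_coin ab = map_pmf (\<lambda>x. (fst ab, snd ab, x)) (bernoulli_pmf (1/2))"

lemma finite_pair_choices: "finite {(a, b). 1 \<le> a \<and> a < b \<and> b \<le> (i::nat)}"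
  by (rule finite_subset[of _ "{1..i} \<times> {1..i}"]) auto

lemma pair_choices_nonempty: "2 \<le> i \<Longrightarrow> {(a, b). 1 \<le> a \<and> a < b \<and> b \<le> (i::nat)} \<noteq> {}"
proof -
  assume "2 \<le> i"
  then have "(1, 2) \<in> {(a, b). 1 \<le> a \<and> a < b \<and> b \<le> i}" by simp
  then show ?thesis by blast
qed

lemma choice_pmf_eq_bind:
  assumes "2 \<le> i"
  shows "choice_pmf i = bind_pmf (pair_choice_pmf i) with_coin"
proof -
  define P where "P = {(a, b). 1 \<le> a \<and> a < b \<and> b \<le> i}"
  define coins where "coins = (\<lambda>ab::nat \<times> nat. range (\<lambda>x::bool. (fst ab, snd ab, x)))"
  have inj: "inj (\<lambda>x::bool. (fst ab, snd ab, x))" for ab :: "nat \<times> nat" by (auto simp: inj_on_def)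
  have "{(a, b, xi). 1 \<le> a \<and> a < b \<and> b \<le> i} = (\<Union>ab\<in>P. coins ab)"
    unfolding P_def coins_def by auto
  also have "pmf_of_set \<dots> = bind_pmf (pmf_of_set P) (\<lambda>ab. pmf_of_set (coins ab))"
    using finite_pair_choices pair_choices_nonempty[OF assms]
    by (intro pmf_of_set_UN[where n=2])
      (auto simp: P_def coins_def disjoint_family_on_def card_image[OF inj])
  also have "\<dots> = bind_pmf (pair_choice_pmf i) with_coin"
    unfolding pair_choice_pmf_def P_def[symmetric] with_coin_def bernoulli_pmf_half_conv_pmf_of_set
    by (intro bind_pmf_cong refl) (simp add: coins_def map_pmf_of_set_inj[OF inj])
  finally show ?thesis unfolding choice_pmf_def .
qed

definition pairs_pmf :: "nat \<Rightarrow> (nat \<Rightarrow> nat \<times> nat) pmf" where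
  "pairs_pmf n = Pi_pmf {2..n} (0, 0) pair_choice_pmf"

definition coins_pmf :: "nat \<Rightarrow> (nat \<Rightarrow> nat \<times> nat) \<Rightarrow> (nat \<Rightarrow> choice) pmf" where
  "coins_pmf n f = Pi_pmf {2..n} (0, 0, False) (\<lambda>i. with_coin (f i))"

lemma kingman_pmf_eq_bind: "kingman_pmf n = bind_pmf (pairs_pmf n) (coins_pmf n)"
proof -
  have "kingman_pmf n = Pi_pmf {2..n} (0, 0, False) (\<lambda>i. bind_pmf (pair_choice_pmf i) with_coin)"
    unfolding kingman_pmf_def by (intro Pi_pmf_cong) (auto simp: choice_pmf_eq_bind)
  also have "\<dots> = bind_pmf (pairs_pmf n) (coins_pmf n)"
    unfolding pairs_pmf_def coins_pmf_def by (subst Pi_pmf_bind[where d'="(0, 0)"]) simp_all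
  finally show ?thesis .
qed

definition pairs_of :: "(nat \<Rightarrow> choice) \<Rightarrow> nat \<Rightarrow> nat \<times> nat" where
  "pairs_of w i = (fst (w i), fst (snd (w i)))"

lemma set_coins_pmf:
  assumes "f \<in> set_pmf (pairs_pmf n)" "w \<in> set_pmf (coins_pmf n f)"
  shows "pairs_of w = f" "valid_choices n w"
proof -
  have f_in: "f i \<in> set_pmf (pair_choice_pmf i)" if "i \<in> {2..n}" for i
    using assms(1) that unfolding pairs_pmf_def set_Pi_pmf[OF finite_atLeastAtMost] PiE_dflt_def
    by auto
  have f: "f i \<in> {(a, b). 1 \<le> a \<and> a < b \<and> b \<le> i}" if "i \<in> {2..n}" for i
    using f_in[OF that] that finite_pair_choices pair_choices_nonempty[of i] unfolding pair_choice_pmf_def by simp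
  have f0: "f i = (0, 0)" if "i \<notin> {2..n}" for i
    using assms(1) that unfolding pairs_pmf_def set_Pi_pmf[OF finite_atLeastAtMost] PiE_dflt_def
    by auto
  have w: "\<And>i. i \<in> {2..n} \<Longrightarrow> w i \<in> range (\<lambda>x. (fst (f i), snd (f i), x))"
    "\<And>i. i \<notin> {2..n} \<Longrightarrow> w i = (0, 0, False)"
    using assms(2) unfolding coins_pmf_def set_Pi_pmf[OF finite_atLeastAtMost] PiE_dflt_def with_coin_def
    by auto
  show "pairs_of w = f"
  proof
    fix i show "pairs_of w i = f i"
      using w[of i] f0[of i] unfolding pairs_of_def by (cases "i \<in> {2..n}") auto
  qed
  show "valid_choices n w"
    unfolding valid_choices_def using w(1) f by fastforce
qed

lemma map_snd_sort_key: "map snd (sort_key (\<lambda>(r, V). f V) xs) = sort_key f (map snd xs)"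
proof -
  have insort: "map snd (insort_key (\<lambda>(r, V). f V) x ys) = insort_key f (snd x) (map snd ys)" for x ys
    by (induction ys) (auto simp: case_prod_beta)
  show ?thesis by (induction xs) (simp_all add: insort)
qed

lemma snd_nth_eq_if_map_snd_eq:
  fixes xs ys :: "('a \<times> 'b) list"
  shows "map snd xs = map snd ys \<Longrightarrow> snd (xs ! j) = snd (ys ! j)"
proof (induction xs arbitrary: ys j)
  case (Cons x xs)
  then obtain y ys' where "ys = y # ys'" by (cases ys) auto
  then show ?case using Cons by (cases j) auto
qed simp

lemma map_snd_merge_step:
  assumes "map snd ts = map snd ts'"
  shows "map snd (fst (merge_step (a, b, x) (ts, E))) = map snd (fst (merge_step (a, b, x') (ts', E')))"
proof -
  obtain ra Va rb Vb where ta: "ts ! (a - 1) = (ra, Va)" and tb: "ts ! (b - 1) = (rb, Vb)"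
    by fastforce
  obtain ra' rb' where ta': "ts' ! (a - 1) = (ra', Va)" and tb': "ts' ! (b - 1) = (rb', Vb)"
    using snd_nth_eq_if_map_snd_eq[OF assms, of "a - 1"] snd_nth_eq_if_map_snd_eq[OF assms, of "b - 1"] ta tb
    by (metis prod.collapse snd_conv)
  show ?thesis
    unfolding merge_step_eq[OF ta tb] merge_step_eq[OF ta' tb'] fst_conv map_snd_sort_key
    by (simp add: nths_map[symmetric] assms)
qed

lemma map_snd_coal_aux:
  assumes "pairs_of w = pairs_of w'"
  shows "map snd (fst (coal_aux w n m)) = map snd (fst (coal_aux w' n m))"
proof (induction m)
  case (Suc m)
  obtain a b x x' where "w (n - m) = (a, b, x)" "w' (n - m) = (a, b, x')"
    using fun_cong[OF assms, of "n - m"] unfolding pairs_of_def by (metis prod.collapse prod.inject)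
  then show ?case
    using Suc map_snd_merge_step
    by (metis coal_aux.simps(2) prod.collapse)
qed simp

lemma vertex_sets_coal:
  "pairs_of w = pairs_of w' \<Longrightarrow> snd (fst (coal w n i) ! j) = snd (fst (coal w' n i) ! j)"
  unfolding coal_def by (rule snd_nth_eq_if_map_snd_eq[OF map_snd_coal_aux])

lemma sel_eq_if_pairs_eq: "pairs_of w = pairs_of w' \<Longrightarrow> sel w n v = sel w' n v"
  using vertex_sets_coal[of w w'] fun_cong[of "pairs_of w" "pairs_of w'"]
  unfolding sel_def pairs_of_def by (auto simp: case_prod_beta)

lemma wins_eq_if_pairs_eq:
  assumes "pairs_of w = pairs_of w'"
  shows "wins w n v i \<longleftrightarrow> snd (snd (w i)) \<noteq> (v \<notin> snd (fst (coal w' n i) ! (fst (w' i) - 1)))"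
  using vertex_sets_coal[OF assms] fun_cong[OF assms, of i]
  unfolding wins_def pairs_of_def by (auto simp: case_prod_beta)

text \<open>Any choice sequence with the pairs f can serve as a reference for the vertex sets, since
  they do not depend on the coins.\<close>

definition false_coins :: "(nat \<Rightarrow> nat \<times> nat) \<Rightarrow> nat \<Rightarrow> choice" where
  "false_coins f i = (fst (f i), snd (f i), False)"

lemma pairs_of_false_coins: "pairs_of (false_coins f) = f"
  unfolding pairs_of_def false_coins_def by auto

lemma dn_hn_coins_pmf:
  assumes v: "1 \<le> v" "v \<le> n" and f: "f \<in> set_pmf (pairs_pmf n)"
  shows "map_pmf (\<lambda>w. (dn w n v, hn w n v)) (coins_pmf n f)
       = run_losses_pmf (card (sel (false_coins f) n v))"
proof -
  define S where "S = sel (false_coins f) n v"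
  define flip where "flip i = (v \<notin> snd (fst (coal (false_coins f) n i) ! (fst (f i) - 1)))" for i
  have "map_pmf (\<lambda>w. (dn w n v, hn w n v)) (coins_pmf n f)
      = map_pmf (\<lambda>w. run_losses S (\<lambda>i. snd (snd (w i)) \<noteq> flip i)) (coins_pmf n f)"
  proof (intro map_pmf_cong refl)
    fix w assume "w \<in> set_pmf (coins_pmf n f)"
    then have pairs: "pairs_of w = pairs_of (false_coins f)" and "valid_choices n w"
      using set_coins_pmf[OF f] pairs_of_false_coins by simp_all
    moreover have "wins w n v = (\<lambda>i. snd (snd (w i)) \<noteq> flip i)"
      using wins_eq_if_pairs_eq[OF pairs] unfolding flip_def false_coins_def by auto
    ultimately show "(dn w n v, hn w n v) = run_losses S (\<lambda>i. snd (snd (w i)) \<noteq> flip i)"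
      using dn_hn_eq_run_losses[OF v] sel_eq_if_pairs_eq[OF pairs] unfolding S_def by simp
  qed
  also have "\<dots> = run_losses_pmf (card S)"
    unfolding coins_pmf_def
  proof (rule map_run_losses_Pi_pmf_subset)
    fix i
    show "map_pmf (\<lambda>x. snd (snd x) \<noteq> flip i) (with_coin (f i)) = bernoulli_pmf (1/2)"
      by (cases "flip i") (simp_all add: with_coin_def pmf.map_comp o_def map_pmf_Not_bernoulli_half)
  qed (simp_all add: S_def sel_subset)
  finally show ?thesis unfolding S_def .
qed

lemma card_sel_coins_pmf:
  assumes "f \<in> set_pmf (pairs_pmf n)"
  shows "map_pmf (\<lambda>w. card (sel w n v)) (coins_pmf n f) = return_pmf (card (sel (false_coins f) n v))"
proof -
  have "map_pmf (\<lambda>w. card (sel w n v)) (coins_pmf n f)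
      = map_pmf (\<lambda>_. card (sel (false_coins f) n v)) (coins_pmf n f)"
    using set_coins_pmf(1)[OF assms] pairs_of_false_coins sel_eq_if_pairs_eq
    by (intro map_pmf_cong refl) metis
  then show ?thesis by (simp add: map_pmf_const)
qed

lemma dn_hn_kingman_pmf:
  assumes "1 \<le> v" "v \<le> n"
  shows "map_pmf (\<lambda>w. (dn w n v, hn w n v)) (kingman_pmf n)
       = bind_pmf (map_pmf (\<lambda>w. card (sel w n v)) (kingman_pmf n)) run_losses_pmf"
proof -
  have "map_pmf (\<lambda>w. (dn w n v, hn w n v)) (kingman_pmf n)
      = bind_pmf (pairs_pmf n) (\<lambda>f. run_losses_pmf (card (sel (false_coins f) n v)))"
    unfolding kingman_pmf_eq_bind map_bind_pmf by (intro bind_pmf_cong refl dn_hn_coins_pmf[OF assms])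
  also have "\<dots> = bind_pmf (pairs_pmf n)
      (\<lambda>f. bind_pmf (map_pmf (\<lambda>w. card (sel w n v)) (coins_pmf n f)) run_losses_pmf)"
    by (intro bind_pmf_cong refl) (simp add: card_sel_coins_pmf bind_return_pmf)
  also have "\<dots> = bind_pmf (map_pmf (\<lambda>w. card (sel w n v)) (kingman_pmf n)) run_losses_pmf"
    unfolding kingman_pmf_eq_bind map_bind_pmf bind_assoc_pmf ..
  finally show ?thesis .
qed

lemma map_fst_mixture_run_losses:
  assumes "map_pmf X M = bind_pmf (map_pmf c M) run_losses_pmf"
  shows "map_pmf (\<lambda>w. fst (X w)) M = map_pmf (\<lambda>(w, g). min g (c w)) (pair_pmf M (geometric_pmf (1/2)))"
proof -
  have "map_pmf (\<lambda>w. fst (X w)) M = bind_pmf (map_pmf c M) (\<lambda>m. map_pmf fst (run_losses_pmf m))"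
    using arg_cong[OF assms, of "map_pmf fst"] by (simp add: pmf.map_comp o_def map_bind_pmf)
  also have "\<dots> = map_pmf (\<lambda>(w, g). min g (c w)) (pair_pmf M (geometric_pmf (1/2)))"
    by (simp add: map_fst_run_losses_pmf map_pair_pmf_eq_bind bind_map_pmf)
  finally show ?thesis .
qed

lemma prob_mixture_run_losses:
  assumes "map_pmf X M = bind_pmf (map_pmf c M) run_losses_pmf"
  shows "measure_pmf.prob M {w. k \<le> fst (X w) \<and> snd (X w) \<le> l}
    = (1/2) ^ k * measure_pmf.prob (bind_pmf M (\<lambda>w. map_pmf (\<lambda>x. (w, x)) (binomial_pmf (c w - k) (1/2))))
        {(w, x). x \<le> l \<and> k \<le> c w}"
proof -
  define tail where
    "tail m = (if k \<le> m then measure_pmf.prob (binomial_pmf (m - k) (1/2)) {..l} else 0)" for m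
  have "measure_pmf.prob M {w. k \<le> fst (X w) \<and> snd (X w) \<le> l}
      = measure_pmf.prob (map_pmf X M) {rl. k \<le> fst rl \<and> snd rl \<le> l}"
    by (simp add: vimage_def)
  also have "\<dots> = measure_pmf.expectation M (\<lambda>w. (1/2) ^ k * tail (c w))"
    unfolding assms measure_bind_pmf prob_run_losses_pmf tail_def by simp
  also have "\<dots> = (1/2) ^ k * measure_pmf.expectation M (\<lambda>w. measure_pmf.prob
      (map_pmf (\<lambda>x. (w, x)) (binomial_pmf (c w - k) (1/2))) {(w, x). x \<le> l \<and> k \<le> c w})"
  proof -
    have "tail (c w) = measure_pmf.prob (map_pmf (\<lambda>x. (w, x)) (binomial_pmf (c w - k) (1/2)))
        {(w, x). x \<le> l \<and> k \<le> c w}" for w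
      by (cases "k \<le> c w") (simp_all add: tail_def vimage_def atMost_def)
    then show ?thesis by simp
  qed
  finally show ?thesis by (simp add: measure_bind_pmf)
qed

theorem lemma2p5:
  fixes n v :: nat
  assumes "1 \<le> v" and "v \<le> n"
  shows "(map_pmf (\<lambda>w. dn w n v) (kingman_pmf n)
           = map_pmf (\<lambda>(w, g). min g (card (sel w n v)))
               (pair_pmf (kingman_pmf n) (geometric_pmf (1/2))))
    \<and> (\<forall>k l :: nat.
           measure_pmf.prob (kingman_pmf n) {w. dn w n v \<ge> k \<and> hn w n v \<le> l}
         = (1/2) ^ k *
           measure_pmf.prob
             (bind_pmf (kingman_pmf n)
                (\<lambda>w. map_pmf (\<lambda>x. (w, x)) (binomial_pmf (card (sel w n v) - k) (1/2))))
             {(w, x). x \<le> l \<and> card (sel w n v) \<ge> k})"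
proof -
  note mixture = dn_hn_kingman_pmf[OF assms]
  show ?thesis
    using map_fst_mixture_run_losses[OF mixture] prob_mixture_run_losses[OF mixture] by simp
qed

end
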